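(* Let $\mathfrak{g}$ be a finite-dimensional indecomposable metric Lie algebra with index $r>0$ admitting a maximally isotropic centre. Then as a vector space $$\mathfrak{g} = \bigoplus_{i=1}^r \left(\mathbb{R} u_i \oplus \mathbb{R} v_i\right) \oplus E,$$ where $E$ is a euclidean (positive-definite) subspace, $u_i, v_i \perp E$, $\langle u_i,v_j\rangle= \delta_{ij}$, $\langle u_i,u_j\rangle = \langle v_i,v_j\rangle = 0$ (the $v_i$ spanning the centre). Moreover the Lie bracket is given by $$[u_i,u_j] = K_{ij} + \sum_{k=1}^r L_{ijk} v_k,\qquad [u_i,x] = J_ix - \sum_{j=1}^r \langle K_{ij},x\rangle v_j,\qquad [x,y] = - \sum_{i=1}^r \langle x, J_i y\rangle v_i$$ for all $x,y\in E$ (and the $v_i$ are central), where $K_{ij} = - K_{ji} \in E$, $L_{ijk} \in \mathbb{R}$ is totally skewsymmetric in its indices, $J_i \in \mathfrak{so}(E)$, and in addition these obey $$J_i J_j - J_j J_i = 0,\qquad J_i K_{jk} + J_j K_{ki} + J_k K_{ij} = 0,\qquad \langle K_{\ell i},K_{jk}\rangle + \langle K_{\ell j},K_{ki}\rangle + \langle K_{\ell k},K_{ij}\rangle =0$$ for all indices $i,j,k,\ell\in\{1,\dots,r\}$.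
   Context: A metric Lie algebra is a real Lie algebra with a nondegenerate symmetric bilinear form $\langle-,-\rangle$ which is ad-invariant: $\langle [x,y],z\rangle = -\langle y,[x,z]\rangle$. It is indecomposable if it is not isomorphic to an orthogonal direct sum of two metric Lie algebras of positive dimension. Its index is the dimension of a maximal negative-definite subspace. A maximally isotropic centre is a subspace $Z$ of the centre of the Lie algebra whose dimension equals the index and on which the inner product vanishes identically. $\mathfrak{so}(E)$ denotes the skewsymmetric endomorphisms of the euclidean space $E$. *)

theory Defs
  imports "HOL-Analysis.Analysis"
begin

text \<open>A finite-dimensional real Lie algebra is modelled on a type 'a of class
euclidean_space (any finite-dimensional real vector space); the inner product of
that class is NOT used, the metric is the separate bilinear form B.\<close>

definition lie_algebra :: "('a::real_vector \<Rightarrow> 'a \<Rightarrow> 'a) \<Rightarrow> bool" where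
  "lie_algebra br \<longleftrightarrow> bilinear br \<and> (\<forall>x. br x x = 0) \<and>
     (\<forall>x y z. br x (br y z) + br y (br z x) + br z (br x y) = 0)"

definition metric_lie_algebra ::
  "('a::real_vector \<Rightarrow> 'a \<Rightarrow> 'a) \<Rightarrow> ('a \<Rightarrow> 'a \<Rightarrow> real) \<Rightarrow> bool" where
  "metric_lie_algebra br B \<longleftrightarrow> lie_algebra br \<and> bilinear B \<and>
     (\<forall>x y. B x y = B y x) \<and>
     (\<forall>x. (\<forall>y. B x y = 0) \<longrightarrow> x = 0) \<and>
     (\<forall>x y z. B (br x y) z = - B y (br x z))"

definition lie_ideal :: "('a::real_vector \<Rightarrow> 'a \<Rightarrow> 'a) \<Rightarrow> 'a set \<Rightarrow> bool" where
  "lie_ideal br I \<longleftrightarrow> subspace I \<and> (\<forall>x y. y \<in> I \<longrightarrow> br x y \<in> I)"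

text \<open>Decomposable: orthogonal direct sum of two nonzero ideals (equivalently,
isomorphic to an orthogonal direct sum of two metric Lie algebras of positive dimension).\<close>
definition decomposable ::
  "('a::real_vector \<Rightarrow> 'a \<Rightarrow> 'a) \<Rightarrow> ('a \<Rightarrow> 'a \<Rightarrow> real) \<Rightarrow> bool" where
  "decomposable br B \<longleftrightarrow> (\<exists>I J. lie_ideal br I \<and> lie_ideal br J \<and>
     I \<noteq> {0} \<and> J \<noteq> {0} \<and> I \<inter> J = {0} \<and>
     (\<forall>x. \<exists>a\<in>I. \<exists>b\<in>J. x = a + b) \<and> (\<forall>a\<in>I. \<forall>b\<in>J. B a b = 0))"

definition indecomposable ::
  "('a::real_vector \<Rightarrow> 'a \<Rightarrow> 'a) \<Rightarrow> ('a \<Rightarrow> 'a \<Rightarrow> real) \<Rightarrow> bool" where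
  "indecomposable br B \<longleftrightarrow> \<not> decomposable br B"

definition neg_definite_on :: "('a::real_vector \<Rightarrow> 'a \<Rightarrow> real) \<Rightarrow> 'a set \<Rightarrow> bool" where
  "neg_definite_on B W \<longleftrightarrow> (\<forall>w\<in>W. w \<noteq> 0 \<longrightarrow> B w w < 0)"

definition pos_definite_on :: "('a::real_vector \<Rightarrow> 'a \<Rightarrow> real) \<Rightarrow> 'a set \<Rightarrow> bool" where
  "pos_definite_on B W \<longleftrightarrow> (\<forall>w\<in>W. w \<noteq> 0 \<longrightarrow> B w w > 0)"

definition form_index :: "('a::euclidean_space \<Rightarrow> 'a \<Rightarrow> real) \<Rightarrow> nat" where
  "form_index B = Max {dim W | W. subspace W \<and> neg_definite_on B W}"

definition lie_centre :: "('a::real_vector \<Rightarrow> 'a \<Rightarrow> 'a) \<Rightarrow> 'a set" where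
  "lie_centre br = {z. \<forall>x. br z x = 0}"

definition max_isotropic_centre ::
  "('a::euclidean_space \<Rightarrow> 'a \<Rightarrow> 'a) \<Rightarrow> ('a \<Rightarrow> 'a \<Rightarrow> real) \<Rightarrow> 'a set \<Rightarrow> bool" where
  "max_isotropic_centre br B Z \<longleftrightarrow> subspace Z \<and> Z \<subseteq> lie_centre br \<and>
     dim Z = form_index B \<and> (\<forall>x\<in>Z. \<forall>y\<in>Z. B x y = 0)"

end

theory Submission
  imports Defs
begin

text \<open>Choose a basis v_i of the isotropic centre and an isotropic dual family u_i, and let E be the
orthogonal complement of the span of the u_i, v_i. That span contains an r-dimensional
negative-definite subspace and r is the index, so E is euclidean. A non-null central vector
would split off, so the centre is isotropic and hence equals the span of the v_i. All brackets
are orthogonal to the centre; the bracket relations just record the components along E and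
the v_i, and the identities are instances of the Jacobi identity.

The substance is that the E-component of [E,E] vanishes. That component makes E a Lie algebra
with a positive-definite invariant form, on which the ad u_i act as skew derivations. Such
derivations are inner on the derived algebra S (minimise the trace norm of D - ad c), and
therefore the brackets [S,S] taken in the whole algebra span a positive-definite ideal. By
indecomposability this ideal is zero, so S is abelian, which forces [E,E] = 0 in E.\<close>

lemma sum_lessThan_delta:
  fixes g :: "nat \<Rightarrow> 'b::comm_monoid_add"
  assumes "j < k" and "\<And>i. i < k \<Longrightarrow> g i = (if i = j then a else 0)"
  shows "(\<Sum>i<k. g i) = a"
proof -
  have "(\<Sum>i<k. g i) = (\<Sum>i<k. if i = j then a else 0)" using assms(2) by (intro sum.cong) auto
  then show ?thesis using assms(1) by simp
qed

lemma span_image_lessThan_sum: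
  fixes w :: "nat \<Rightarrow> 'a::real_vector"
  assumes "inj_on w {..<k}" and "x \<in> span (w ` {..<k})"
  obtains c where "x = (\<Sum>i<k. c i *\<^sub>R w i)"
proof -
  have "\<exists>f. x = (\<Sum>y\<in>w ` {..<k}. f y *\<^sub>R y)"
    using assms(2) span_finite[of "w ` {..<k}"] by auto
  then obtain f where "x = (\<Sum>y\<in>w ` {..<k}. f y *\<^sub>R y)" by blast
  then have "x = (\<Sum>i<k. f (w i) *\<^sub>R w i)" by (simp add: sum.reindex[OF assms(1)])
  then show ?thesis by (rule that)
qed

lemma dim_le_form_index:
  fixes B :: "'a::euclidean_space \<Rightarrow> 'a \<Rightarrow> real"
  assumes "subspace W" and "neg_definite_on B W"
  shows "dim W \<le> form_index B"
proof -
  have "{dim W | W. subspace W \<and> neg_definite_on B W} \<subseteq> {..DIM('a)}"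
    using dim_subset_UNIV by auto
  then have "finite {dim W | W. subspace W \<and> neg_definite_on B W}" using finite_subset by blast
  then show ?thesis unfolding form_index_def using assms by (intro Max_ge) auto
qed

lemma affine_nonneg_imp_const:
  fixes A \<beta> :: real
  assumes "\<And>t. 0 \<le> A + t * \<beta>"
  shows "\<beta> = 0"
  using assms[of "- (A + 1) / \<beta>"] by (cases "\<beta> = 0") (simp_all add: field_simps)

text \<open>No nondegeneracy of N is needed: if the part a' of a that is N-orthogonal to S is N-null,
the lower bound forces \<phi> a' = N c0 a'.\<close>

lemma represents_functional_insert:
  fixes N :: "'b::real_vector \<Rightarrow> 'b \<Rightarrow> real"
  assumes bil: "bilinear N" and sym: "\<And>x y. N x y = N y x" and lin: "linear \<phi>"
    and bound: "\<And>c. c \<in> span (insert a S) \<Longrightarrow> \<kappa> - 2 * \<phi> c + N c c \<ge> 0"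
    and c0: "c0 \<in> span S" "\<And>y. y \<in> span S \<Longrightarrow> N c0 y = \<phi> y"
    and d: "d \<in> span S" "\<And>y. y \<in> span S \<Longrightarrow> N d y = N a y"
  shows "\<exists>c\<in>span (insert a S). \<forall>y\<in>span (insert a S). N c y = \<phi> y"
proof -
  have l1: "linear (\<lambda>x. N x y)" and l2: "linear (\<lambda>y. N x y)" for x y
    using bil by (simp_all add: bilinear_def)
  note N_simps[simp] = linear_add[OF l1] linear_add[OF l2] linear_diff[OF l1] linear_diff[OF l2]
    linear_scale[OF l1] linear_scale[OF l2]
  note \<phi>_simps[simp] = linear_add[OF lin] linear_diff[OF lin] linear_scale[OF lin]
  have sub: "span S \<subseteq> span (insert a S)" by (rule span_mono) auto
  define a' where "a' = a - d"
  have a'S: "N a' y = 0" if "y \<in> span S" for y using d that by (simp add: a'_def)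
  have a'a: "N a' a = N a' a'" using a'S[OF d(1)] by (simp add: a'_def)
  have a'_span: "a' \<in> span (insert a S)" unfolding a'_def
    using d(1) sub by (intro span_diff) (auto intro: span_base)
  have c0_span: "c0 \<in> span (insert a S)" using c0(1) sub by auto
  define c where "c = (if N a' a' = 0 then c0 else c0 + ((\<phi> a - N c0 a) / N a' a') *\<^sub>R a')"
  have cS: "N c y = \<phi> y" if "y \<in> span S" for y
    using c0 that a'S by (simp add: c_def)
  have ca: "N c a = \<phi> a"
  proof (cases "N a' a' = 0")
    case True
    have "0 \<le> (\<kappa> - 2 * \<phi> c0 + N c0 c0) + t * (2 * (N c0 a' - \<phi> a'))" for t
    proof -
      have "0 \<le> \<kappa> - 2 * \<phi> (c0 + t *\<^sub>R a') + N (c0 + t *\<^sub>R a') (c0 + t *\<^sub>R a')"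
        using c0_span a'_span by (intro bound span_add span_scale)
      then show ?thesis using True sym[of a' c0] by (simp add: algebra_simps)
    qed
    then have "2 * (N c0 a' - \<phi> a') = 0" by (rule affine_nonneg_imp_const)
    then show ?thesis using True c0(2)[OF d(1)] by (simp add: c_def a'_def)
  next
    case False
    then show ?thesis using a'a by (simp add: c_def field_simps)
  qed
  have c_span: "c \<in> span (insert a S)"
    using a'_span c0_span by (simp add: c_def span_add span_scale)
  show ?thesis
  proof (intro bexI[OF _ c_span] ballI)
    fix y assume "y \<in> span (insert a S)"
    then obtain t where t: "y - t *\<^sub>R a \<in> span S" using span_insert[of a S] by auto
    have "N c y = N c (y - t *\<^sub>R a) + t * N c a" by simp
    also have "\<dots> = \<phi> (y - t *\<^sub>R a) + t * \<phi> a" using cS[OF t] ca by simp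
    also have "\<dots> = \<phi> y" by simp
    finally show "N c y = \<phi> y" .
  qed
qed

lemma psd_form_represents_functional:
  fixes N :: "'b::real_vector \<Rightarrow> 'b \<Rightarrow> real"
  assumes bil: "bilinear N" and sym: "\<And>x y. N x y = N y x" and fin: "finite S"
    and psd: "\<And>x. x \<in> span S \<Longrightarrow> N x x \<ge> 0"
    and lin: "linear \<phi>" and bound: "\<And>c. c \<in> span S \<Longrightarrow> \<kappa> - 2 * \<phi> c + N c c \<ge> 0"
  shows "\<exists>c\<in>span S. \<forall>y\<in>span S. N c y = \<phi> y"
proof -
  have l1: "linear (\<lambda>x. N x y)" and l2: "linear (\<lambda>y. N x y)" for x y
    using bil by (simp_all add: bilinear_def)
  note N_simps[simp] = linear_diff[OF l1] linear_diff[OF l2] linear_0[OF l1]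
  show ?thesis
    using fin psd lin bound
  proof (induction S arbitrary: \<phi> \<kappa> rule: finite_induct)
    case empty
    then show ?case by (intro bexI[of _ 0]) (auto simp: linear_0)
  next
    case (insert a S \<phi> \<kappa>)
    have sub: "span S \<subseteq> span (insert a S)" by (rule span_mono) auto
    have psd_S: "N x x \<ge> 0" if "x \<in> span S" for x using insert.prems(1) sub that by blast
    obtain c0 where c0: "c0 \<in> span S" "\<forall>y\<in>span S. N c0 y = \<phi> y"
      using insert.IH[OF psd_S insert.prems(2)] insert.prems(3) sub by blast
    have "N a a - 2 * N a c + N c c \<ge> 0" if "c \<in> span S" for c
    proof -
      have "a - c \<in> span (insert a S)" using that sub by (intro span_diff) (auto intro: span_base)
      then show ?thesis using insert.prems(1)[of "a - c"] sym[of c a] by simp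
    qed
    then obtain d where d: "d \<in> span S" "\<forall>y\<in>span S. N d y = N a y"
      using insert.IH[OF psd_S l2[of a], of "N a a"] by blast
    show ?case
      by (rule represents_functional_insert[OF bil sym insert.prems(2,3) c0(1) _ d(1)])
        (use c0(2) d(2) in blast)+
  qed
qed

locale symmetric_form =
  fixes B :: "'a::euclidean_space \<Rightarrow> 'a \<Rightarrow> real"
  assumes form_bilinear: "bilinear B" and form_commute: "B x y = B y x"
begin

lemma linear_form_left: "linear (\<lambda>x. B x y)" and linear_form_right: "linear (\<lambda>y. B x y)"
  using form_bilinear by (simp_all add: bilinear_def)

lemma form_simps[simp]:
  "B (x + y) z = B x z + B y z" "B z (x + y) = B z x + B z y"
  "B (x - y) z = B x z - B y z" "B z (x - y) = B z x - B z y"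
  "B (c *\<^sub>R x) z = c * B x z" "B z (c *\<^sub>R x) = c * B z x"
  "B (- x) z = - B x z" "B z (- x) = - B z x"
  "B 0 z = 0" "B z 0 = 0"
  "B (sum f A) z = (\<Sum>i\<in>A. B (f i) z)" "B z (sum f A) = (\<Sum>i\<in>A. B z (f i))"
  using linear_add[OF linear_form_left] linear_add[OF linear_form_right]
    linear_diff[OF linear_form_left] linear_diff[OF linear_form_right]
    linear_scale[OF linear_form_left] linear_scale[OF linear_form_right]
    linear_neg[OF linear_form_left] linear_neg[OF linear_form_right]
    linear_0[OF linear_form_left] linear_0[OF linear_form_right]
    linear_sum[OF linear_form_left] linear_sum[OF linear_form_right]
  by auto

lemma form_zero_on_span:
  assumes "y \<in> span S" and "\<And>f. f \<in> S \<Longrightarrow> B z f = 0"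
  shows "B z y = 0"
  using linear_eq_0_on_span[OF linear_form_right[of z]] assms by blast

lemma isotropic_if_null:
  assumes W: "subspace W" and null: "\<And>x. x \<in> W \<Longrightarrow> B x x = 0" and "x \<in> W" "y \<in> W"
  shows "B x y = 0"
  using null[OF subspace_add[OF W \<open>x \<in> W\<close> \<open>y \<in> W\<close>]] null[OF \<open>x \<in> W\<close>] null[OF \<open>y \<in> W\<close>]
    form_commute[of y x]
  by simp

definition hyperbolic_frame :: "nat \<Rightarrow> (nat \<Rightarrow> 'a) \<Rightarrow> (nat \<Rightarrow> 'a) \<Rightarrow> bool" where
  "hyperbolic_frame k u v \<longleftrightarrow> (\<forall>i<k. \<forall>j<k. B (u i) (v j) = (if i = j then 1 else 0) \<and>
     B (u i) (u j) = 0 \<and> B (v i) (v j) = 0)"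

lemma dual_family_coefficient:
  fixes k :: nat
  assumes dual: "\<And>i j. i < k \<Longrightarrow> j < k \<Longrightarrow> B (w i) (p j) = (if i = j then 1 else 0)"
    and "j < k"
  shows "B (\<Sum>i<k. c i *\<^sub>R w i) (p j) = c j"
  by (simp, rule sum_lessThan_delta) (use assms in auto)

lemma dual_family_independent:
  fixes k :: nat
  assumes dual: "\<And>i j. i < k \<Longrightarrow> j < k \<Longrightarrow> B (w i) (p j) = (if i = j then 1 else 0)"
  shows "inj_on w {..<k}" and "independent (w ` {..<k})"
    and "card (w ` {..<k}) = k" and "dim (span (w ` {..<k})) = k"
proof -
  show inj: "inj_on w {..<k}"
  proof (rule inj_onI)
    fix i j assume "i \<in> {..<k}" "j \<in> {..<k}" "w i = w j"
    then show "i = j" using dual[of i j] dual[of j j] by (auto split: if_splits)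
  qed
  show ind: "independent (w ` {..<k})"
  proof (rule independent_if_scalars_zero)
    fix f x assume f: "(\<Sum>x\<in>w ` {..<k}. f x *\<^sub>R x) = 0" and x: "x \<in> w ` {..<k}"
    then obtain j where j: "j < k" "x = w j" by auto
    have "(\<Sum>i<k. f (w i) *\<^sub>R w i) = 0" using f by (simp add: sum.reindex[OF inj])
    then have "B (\<Sum>i<k. f (w i) *\<^sub>R w i) (p j) = 0" by simp
    then show "f x = 0" using dual_family_coefficient[OF dual j(1), of "\<lambda>i. f (w i)"] j(2) by simp
  qed simp
  show "card (w ` {..<k}) = k" using card_image[OF inj] by simp
  then show "dim (span (w ` {..<k})) = k" using dim_span_eq_card_independent[OF ind] by simp
qed

lemma diagonal_family_le_index:
  assumes dual: "\<And>i j. i < k \<Longrightarrow> j < k \<Longrightarrow> B (w i) (p j) = (if i = j then 1 else 0)"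
    and diag: "\<And>i j. i < k \<Longrightarrow> j < k \<Longrightarrow> B (w i) (w j) = (if i = j then d i else 0)"
    and neg: "\<And>i. i < k \<Longrightarrow> d i < 0"
  shows "k \<le> form_index B"
proof -
  note w = dual_family_independent[OF dual]
  have "neg_definite_on B (span (w ` {..<k}))"
    unfolding neg_definite_on_def
  proof (intro ballI impI)
    fix x assume x: "x \<in> span (w ` {..<k})" "x \<noteq> 0"
    obtain c where c: "x = (\<Sum>i<k. c i *\<^sub>R w i)" using span_image_lessThan_sum[OF w(1) x(1)] .
    obtain i0 where i0: "i0 < k" "c i0 \<noteq> 0"
      using x(2) c by (metis (no_types, lifting) lessThan_iff scale_zero_left sum.neutral)
    have "B x x = (\<Sum>i<k. c i * (\<Sum>j<k. c j * B (w j) (w i)))" by (simp add: c sum_distrib_left)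
    also have "\<dots> = (\<Sum>i<k. d i * (c i)\<^sup>2)"
    proof (intro sum.cong refl)
      fix i assume i: "i \<in> {..<k}"
      have "(\<Sum>j<k. c j * B (w j) (w i)) = c i * d i"
        by (rule sum_lessThan_delta) (use i diag in auto)
      then show "c i * (\<Sum>j<k. c j * B (w j) (w i)) = d i * (c i)\<^sup>2" by (simp add: power2_eq_square)
    qed
    also have "\<dots> \<le> d i0 * (c i0)\<^sup>2"
    proof -
      have "(\<Sum>i\<in>{..<k}-{i0}. d i * (c i)\<^sup>2) \<le> 0"
        using neg by (intro sum_nonpos) (simp add: mult_nonpos_nonneg less_imp_le)
      then show ?thesis using i0 by (simp add: sum.remove)
    qed
    also have "\<dots> < 0" using i0 neg by (simp add: mult_neg_pos)
    finally show "B x x < 0" .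
  qed
  then have "dim (span (w ` {..<k})) \<le> form_index B" by (intro dim_le_form_index) auto
  then show ?thesis using w(4) by simp
qed

lemma hyperbolic_frame_le_index:
  assumes "hyperbolic_frame k u v"
  shows "k \<le> form_index B"
proof (rule diagonal_family_le_index)
  note frame = assms[unfolded hyperbolic_frame_def, rule_format]
  show "B (u i - v i) (v j) = (if i = j then 1 else 0)" if "i < k" "j < k" for i j
    using frame[OF that] by simp
  show "B (u i - v i) (u j - v j) = (if i = j then -2 else 0)" if "i < k" "j < k" for i j
    using frame[OF that] frame[OF that(2,1)] form_commute[of "v i" "u j"] by auto
qed simp

definition orthonormal_basis :: "'a set \<Rightarrow> 'a set \<Rightarrow> bool" where
  "orthonormal_basis W Q \<longleftrightarrow> finite Q \<and> Q \<subseteq> W \<and> W \<subseteq> span Q \<and> (\<forall>e\<in>Q. B e e = 1) \<and>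
     (\<forall>e\<in>Q. \<forall>f\<in>Q. e \<noteq> f \<longrightarrow> B e f = 0)"

lemma orthonormal_basis_exists:
  assumes "subspace W" and "pos_definite_on B W"
  shows "\<exists>Q. orthonormal_basis W Q"
  using assms
proof (induction "dim W" arbitrary: W rule: less_induct)
  case (less W)
  show ?case
  proof (cases "W \<subseteq> {0}")
    case True
    then show ?thesis by (intro exI[of _ "{}"]) (auto simp: orthonormal_basis_def span_zero)
  next
    case False
    then obtain e0 where e0: "e0 \<in> W" "e0 \<noteq> 0" by auto
    have "B e0 e0 > 0" using less.prems(2) e0 unfolding pos_definite_on_def by auto
    define e where "e = (1 / sqrt (B e0 e0)) *\<^sub>R e0"
    have eW: "e \<in> W" using less.prems(1) e0(1) by (simp add: e_def subspace_scale)
    have ee: "B e e = 1" using \<open>B e0 e0 > 0\<close> by (simp add: e_def)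
    define W' where "W' = {x \<in> W. B x e = 0}"
    have W': "subspace W'" "pos_definite_on B W'"
      using less.prems unfolding W'_def subspace_def pos_definite_on_def by auto
    have "e \<notin> W'" using ee by (simp add: W'_def)
    then have "W' \<subset> W" using eW unfolding W'_def by blast
    then have "dim W' < dim W"
      using dim_psubset[of W' W] W'(1) less.prems(1) by (metis span_eq_iff)
    then obtain Q' where Q': "orthonormal_basis W' Q'" using less.hyps W' by blast
    have e_Q': "e \<notin> Q'" "B f e = 0" "B e f = 0" if "f \<in> Q'" for f
      using Q' that ee form_commute[of e f] unfolding orthonormal_basis_def W'_def by auto
    have "W \<subseteq> span (insert e Q')"
    proof
      fix x assume x: "x \<in> W"
      have "x - B x e *\<^sub>R e \<in> W'" unfolding W'_def using x eW less.prems(1) ee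
        by (simp add: subspace_diff subspace_scale)
      then have "x - B x e *\<^sub>R e \<in> span (insert e Q')"
        using Q' span_mono[of Q' "insert e Q'"] unfolding orthonormal_basis_def by auto
      moreover have "B x e *\<^sub>R e \<in> span (insert e Q')" by (simp add: span_base span_scale)
      ultimately have "(x - B x e *\<^sub>R e) + B x e *\<^sub>R e \<in> span (insert e Q')" by (rule span_add)
      then show "x \<in> span (insert e Q')" by simp
    qed
    then have "orthonormal_basis W (insert e Q')"
      using Q' eW ee e_Q' unfolding orthonormal_basis_def W'_def by auto
    then show ?thesis by blast
  qed
qed

lemma orthonormal_expansion:
  assumes Q: "orthonormal_basis W Q" and x: "x \<in> W"
  shows "(\<Sum>e\<in>Q. B x e *\<^sub>R e) = x"
proof -
  have fin: "finite Q" and span: "x \<in> span Q" using Q x by (auto simp: orthonormal_basis_def)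
  have "(\<lambda>x. x - (\<Sum>e\<in>Q. B x e *\<^sub>R e)) x = 0"
  proof (rule linear_eq_0_on_span[OF _ _ span])
    show "linear (\<lambda>x. x - (\<Sum>e\<in>Q. B x e *\<^sub>R e))"
      by (rule linearI) (simp_all add: scaleR_sum_right sum.distrib algebra_simps)
    fix f assume f: "f \<in> Q"
    have "(\<Sum>e\<in>Q. B f e *\<^sub>R e) = (\<Sum>e\<in>Q. if e = f then f else 0)"
      using Q f by (intro sum.cong) (auto simp: orthonormal_basis_def form_commute)
    then show "f - (\<Sum>e\<in>Q. B f e *\<^sub>R e) = 0" using fin f by simp
  qed
  then show ?thesis by simp
qed

lemma orthonormal_projection:
  assumes Q: "orthonormal_basis W Q" and W: "subspace W"
  shows "(\<Sum>e\<in>Q. B x e *\<^sub>R e) \<in> W"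
    and "y \<in> W \<Longrightarrow> B (x - (\<Sum>e\<in>Q. B x e *\<^sub>R e)) y = 0"
proof -
  have fin: "finite Q" and QW: "Q \<subseteq> W" and WQ: "W \<subseteq> span Q"
    using Q by (auto simp: orthonormal_basis_def)
  show "(\<Sum>e\<in>Q. B x e *\<^sub>R e) \<in> W"
    using QW by (intro subspace_sum[OF W] subspace_scale[OF W]) auto
  have orth_Q: "B (x - (\<Sum>e\<in>Q. B x e *\<^sub>R e)) f = 0" if "f \<in> Q" for f
  proof -
    have "(\<Sum>e\<in>Q. B x e * B e f) = (\<Sum>e\<in>Q. if e = f then B x f else 0)"
      using Q that by (intro sum.cong) (auto simp: orthonormal_basis_def)
    then show ?thesis using fin that by simp
  qed
  show "B (x - (\<Sum>e\<in>Q. B x e *\<^sub>R e)) y = 0" if "y \<in> W"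
    by (rule form_zero_on_span[of y Q]) (use that WQ orth_Q in blast)+
qed

lemma trace_commute:
  assumes Q: "orthonormal_basis W Q"
    and X: "linear X" "\<And>x. x \<in> W \<Longrightarrow> X x \<in> W" and Y: "linear Y" "\<And>x. x \<in> W \<Longrightarrow> Y x \<in> W"
  shows "(\<Sum>e\<in>Q. B (X (Y e)) e) = (\<Sum>e\<in>Q. B (Y (X e)) e)"
proof -
  have expand: "(\<Sum>e\<in>Q. B (X (Y e)) e) = (\<Sum>e\<in>Q. \<Sum>f\<in>Q. B (Y e) f * B (X f) e)"
    if X: "linear X" and Y: "\<And>x. x \<in> W \<Longrightarrow> Y x \<in> W" for X Y
  proof (rule sum.cong[OF refl])
    fix e assume "e \<in> Q"
    then have "Y e \<in> W" using Q Y by (auto simp: orthonormal_basis_def)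
    then have "X (Y e) = X (\<Sum>f\<in>Q. B (Y e) f *\<^sub>R f)" using orthonormal_expansion[OF Q] by simp
    also have "\<dots> = (\<Sum>f\<in>Q. B (Y e) f *\<^sub>R X f)"
      by (simp add: linear_sum[OF X] linear_scale[OF X])
    finally show "B (X (Y e)) e = (\<Sum>f\<in>Q. B (Y e) f * B (X f) e)" by simp
  qed
  have "(\<Sum>e\<in>Q. B (X (Y e)) e) = (\<Sum>e\<in>Q. \<Sum>f\<in>Q. B (Y e) f * B (X f) e)"
    by (rule expand[OF X(1) Y(2)])
  also have "\<dots> = (\<Sum>f\<in>Q. \<Sum>e\<in>Q. B (X f) e * B (Y e) f)"
    by (subst sum.swap) (simp add: mult.commute)
  also have "\<dots> = (\<Sum>e\<in>Q. B (Y (X e)) e)"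
    by (rule expand[OF Y(1) X(2), symmetric])
  finally show ?thesis .
qed

end

locale nondegenerate_form = symmetric_form +
  assumes form_nondegenerate: "(\<And>y. B x y = 0) \<Longrightarrow> x = 0"
begin

lemma form_represents_linear:
  assumes "linear g"
  shows "\<exists>x. \<forall>y. B x y = g y"
proof -
  define M where "M x = (\<Sum>b\<in>Basis. B x b *\<^sub>R b)" for x
  have linM: "linear M" unfolding M_def
    by (rule linearI) (simp_all add: scaleR_sum_right sum.distrib algebra_simps)
  have BM: "B x y = M x \<bullet> y" for x y
  proof -
    have "B x y = B x (\<Sum>b\<in>Basis. (y \<bullet> b) *\<^sub>R b)" by (simp add: euclidean_representation)
    also have "\<dots> = M x \<bullet> y"
      by (simp add: M_def inner_sum_left inner_sum_right mult.commute inner_commute)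
    finally show ?thesis .
  qed
  have "inj M"
  proof (rule injI)
    fix x y assume "M x = M y"
    then have "B (x - y) z = 0" for z using BM linear_diff[OF linM] by simp
    then show "x = y" using form_nondegenerate[of "x - y"] by simp
  qed
  then obtain x where x: "M x = (\<Sum>b\<in>Basis. g b *\<^sub>R b)"
    using linear_injective_imp_surjective[OF linM] by (metis surjD)
  have "B x y = g y" for y
  proof -
    have "g y = g (\<Sum>b\<in>Basis. (y \<bullet> b) *\<^sub>R b)" by (simp add: euclidean_representation)
    also have "\<dots> = (\<Sum>b\<in>Basis. (y \<bullet> b) * g b)"
      by (simp add: linear_sum[OF assms] linear_scale[OF assms])
    also have "\<dots> = M x \<bullet> y"
      by (simp add: x inner_sum_left inner_sum_right mult.commute inner_commute)
    finally show ?thesis using BM by simp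
  qed
  then show ?thesis by blast
qed

lemma isotropic_family_dual:
  assumes inj: "inj_on v {..<k}" and ind: "independent (v ` {..<k})"
    and iso: "\<And>i j. i < k \<Longrightarrow> j < k \<Longrightarrow> B (v i) (v j) = 0"
  obtains u where "hyperbolic_frame k u v"
proof -
  have "\<exists>w. \<forall>j<k. B w (v j) = (if i = j then 1 else 0)" if i: "i < k" for i
  proof -
    obtain g where g: "linear g" "\<forall>x\<in>v ` {..<k}. g x = (if x = v i then 1 else (0::real))"
      using linear_independent_extend[OF ind, of "\<lambda>x. if x = v i then 1 else (0::real)"] by blast
    obtain w where w: "\<forall>y. B w y = g y" using form_represents_linear[OF g(1)] by blast
    have "B w (v j) = (if i = j then 1 else 0)" if j: "j < k" for j
    proof -
      have "B w (v j) = (if v j = v i then 1 else 0)" using g(2) w j by simp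
      also have "\<dots> = (if i = j then 1 else 0)" using inj i j by (auto simp: inj_on_eq_iff)
      finally show ?thesis .
    qed
    then show ?thesis by blast
  qed
  then obtain w where w: "\<And>i j. i < k \<Longrightarrow> j < k \<Longrightarrow> B (w i) (v j) = (if i = j then 1 else 0)"
    by metis
  \<comment> \<open>Correcting w by half its Gram matrix along the isotropic v makes the family isotropic.\<close>
  define u where "u i = w i - (1/2) *\<^sub>R (\<Sum>l<k. B (w i) (w l) *\<^sub>R v l)" for i
  have uv: "B (u i) (v j) = (if i = j then 1 else 0)" if "i < k" "j < k" for i j
    using that iso by (simp add: u_def w)
  have uu: "B (u i) (u j) = 0" if "i < k" "j < k" for i j
  proof -
    have s1: "(\<Sum>l<k. B (w j) (w l) * B (w i) (v l)) = B (w j) (w i)"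
      by (rule sum_lessThan_delta[OF that(1)]) (simp add: w that)
    have s2: "(\<Sum>l<k. B (w i) (w l) * B (v l) (w j)) = B (w i) (w j)"
      by (rule sum_lessThan_delta[OF that(2)]) (simp add: w that form_commute[of "v _" "w j"])
    show ?thesis unfolding u_def using s1 s2 form_commute[of "w i" "w j"] iso
      by (simp add: sum_distrib_left sum_subtractf algebra_simps)
  qed
  show ?thesis using uv uu iso by (intro that[of u]) (simp add: hyperbolic_frame_def)
qed

lemma isotropic_subspace_frame:
  assumes Z: "subspace Z" and iso: "\<And>x y. x \<in> Z \<Longrightarrow> y \<in> Z \<Longrightarrow> B x y = 0"
  obtains u v where "hyperbolic_frame (dim Z) u v" and "v ` {..<dim Z} \<subseteq> Z"
proof -
  obtain b where b: "b \<subseteq> Z" "independent b" "Z \<subseteq> span b" "card b = dim Z"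
    using basis_exists[of Z] by blast
  have "finite b" using b(2) by (simp add: independent_imp_finite)
  then obtain n :: nat and v where nv: "b = v ` {i. i < n}" "inj_on v {i. i < n}"
    using finite_imp_nat_seg_image_inj_on by blast
  have "{i. i < n} = {..<dim Z}" using b(4) nv card_image[OF nv(2)] by auto
  then have v: "b = v ` {..<dim Z}" "inj_on v {..<dim Z}" using nv by simp_all
  have "B (v i) (v j) = 0" if "i < dim Z" "j < dim Z" for i j
    using iso b(1) v(1) that by blast
  then obtain u where "hyperbolic_frame (dim Z) u v"
    using isotropic_family_dual[OF v(2)] b(2) v(1) by blast
  then show ?thesis using that b(1) v(1) by blast
qed

lemma isotropic_dim_le_index:
  assumes "subspace Z" and "\<And>x y. x \<in> Z \<Longrightarrow> y \<in> Z \<Longrightarrow> B x y = 0"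
  shows "dim Z \<le> form_index B"
proof -
  obtain u v where "hyperbolic_frame (dim Z) u v" using isotropic_subspace_frame[OF assms] .
  then show ?thesis by (rule hyperbolic_frame_le_index)
qed

end

locale metric_lie =
  fixes br :: "'a::euclidean_space \<Rightarrow> 'a \<Rightarrow> 'a" and B :: "'a \<Rightarrow> 'a \<Rightarrow> real"
  assumes metric: "metric_lie_algebra br B"

sublocale metric_lie \<subseteq> nondegenerate_form B
  using metric by unfold_locales (auto simp: metric_lie_algebra_def)

context metric_lie
begin

lemma linear_bracket_left: "linear (\<lambda>x. br x y)" and linear_bracket_right: "linear (\<lambda>y. br x y)"
  using metric by (simp_all add: metric_lie_algebra_def lie_algebra_def bilinear_def)

lemma br_simps[simp]:
  "br (x + y) z = br x z + br y z" "br z (x + y) = br z x + br z y"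
  "br (x - y) z = br x z - br y z" "br z (x - y) = br z x - br z y"
  "br (c *\<^sub>R x) z = c *\<^sub>R br x z" "br z (c *\<^sub>R x) = c *\<^sub>R br z x"
  "br (- x) z = - br x z" "br z (- x) = - br z x"
  "br 0 z = 0" "br z 0 = 0"
  "br (sum f A) z = (\<Sum>i\<in>A. br (f i) z)" "br z (sum f A) = (\<Sum>i\<in>A. br z (f i))"
  using linear_add[OF linear_bracket_left] linear_add[OF linear_bracket_right]
    linear_diff[OF linear_bracket_left] linear_diff[OF linear_bracket_right]
    linear_scale[OF linear_bracket_left] linear_scale[OF linear_bracket_right]
    linear_neg[OF linear_bracket_left] linear_neg[OF linear_bracket_right]
    linear_0[OF linear_bracket_left] linear_0[OF linear_bracket_right]
    linear_sum[OF linear_bracket_left] linear_sum[OF linear_bracket_right]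
  by auto

lemma br_self[simp]: "br x x = 0"
  using metric by (simp add: metric_lie_algebra_def lie_algebra_def)

lemma br_jacobi: "br x (br y z) + br y (br z x) + br z (br x y) = 0"
  using metric by (simp add: metric_lie_algebra_def lie_algebra_def)

lemma br_anti: "br x y = - br y x"
proof -
  have "br x y + br y x = br (x + y) (x + y)" by (simp del: br_self) (simp add: algebra_simps)
  then show ?thesis by (simp add: eq_neg_iff_add_eq_0)
qed

lemma br_leibniz: "br x (br y z) = br (br x y) z + br y (br x z)"
  using br_jacobi[of x y z] br_anti[of z "br x y"] br_anti[of z x] by (simp add: algebra_simps)

lemma form_invariant: "B (br x y) z = - B y (br x z)"
  using metric unfolding metric_lie_algebra_def by blast

lemma subspace_lie_centre: "subspace (lie_centre br)"
  unfolding subspace_def lie_centre_def by simp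

lemma decomposable_if_ideal_splits:
  assumes ideal: "lie_ideal br I" and "I \<noteq> {0}"
    and w: "w \<noteq> 0" "\<And>y. y \<in> I \<Longrightarrow> B w y = 0"
    and nondeg: "\<And>x. x \<in> I \<Longrightarrow> (\<And>y. y \<in> I \<Longrightarrow> B x y = 0) \<Longrightarrow> x = 0"
    and split: "\<And>x. \<exists>a\<in>I. \<forall>y\<in>I. B (x - a) y = 0"
  shows "decomposable br B"
proof -
  define I' where "I' = {x. \<forall>y\<in>I. B x y = 0}"
  have "lie_ideal br I'" unfolding lie_ideal_def
  proof (intro conjI allI impI)
    show "subspace I'" unfolding I'_def subspace_def by simp
    fix x y assume "y \<in> I'"
    then show "br x y \<in> I'" using ideal unfolding I'_def lie_ideal_def by (simp add: form_invariant)
  qed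
  moreover have "I' \<noteq> {0}" using w unfolding I'_def by auto
  moreover have "I \<inter> I' = {0}"
  proof (intro equalityI subsetI)
    fix x assume "x \<in> I \<inter> I'"
    then show "x \<in> {0}" using nondeg unfolding I'_def by auto
  next
    fix x :: 'a assume "x \<in> {0}"
    then show "x \<in> I \<inter> I'" using ideal by (auto simp: I'_def lie_ideal_def subspace_0)
  qed
  moreover have "\<exists>a\<in>I. \<exists>b\<in>I'. x = a + b" for x
  proof -
    obtain a where "a \<in> I" "\<forall>y\<in>I. B (x - a) y = 0" using split by blast
    then show ?thesis unfolding I'_def by (intro bexI[of _ a] bexI[of _ "x - a"]) auto
  qed
  moreover have "\<forall>a\<in>I. \<forall>b\<in>I'. B a b = 0" unfolding I'_def using form_commute by auto
  ultimately show ?thesis unfolding decomposable_def using ideal \<open>I \<noteq> {0}\<close> by blast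
qed

lemma decomposable_if_definite_ideal:
  assumes ideal: "lie_ideal br I" and "I \<noteq> {0}" and pos: "pos_definite_on B I"
    and "w \<noteq> 0" and "\<And>y. y \<in> I \<Longrightarrow> B w y = 0"
  shows "decomposable br B"
proof (rule decomposable_if_ideal_splits[OF ideal \<open>I \<noteq> {0}\<close> \<open>w \<noteq> 0\<close>])
  show "B w y = 0" if "y \<in> I" for y using that assms(5) by blast
  show "x = 0" if "x \<in> I" "\<And>y. y \<in> I \<Longrightarrow> B x y = 0" for x
    using that pos unfolding pos_definite_on_def by fastforce
  have I: "subspace I" using ideal by (simp add: lie_ideal_def)
  obtain Q where Q: "orthonormal_basis I Q" using orthonormal_basis_exists[OF I pos] by blast
  show "\<exists>a\<in>I. \<forall>y\<in>I. B (x - a) y = 0" for x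
    using orthonormal_projection[OF Q I] by blast
qed

lemma lie_ideal_central_line:
  assumes c: "c \<in> lie_centre br"
  shows "lie_ideal br (span {c})"
  unfolding lie_ideal_def
proof (intro conjI allI impI)
  fix x y assume "y \<in> span {c}"
  then obtain k where "y = k *\<^sub>R c" by (auto simp: span_singleton)
  then have "br x y = 0" using c br_anti[of x c] by (simp add: lie_centre_def)
  then show "br x y \<in> span {c}" by (simp add: span_zero)
qed simp

text \<open>The null vector w only serves to make the orthogonal complement of a central line nonzero.\<close>

lemma centre_isotropic:
  assumes indec: "indecomposable br B" and w: "w \<noteq> 0" "B w w = 0" and c: "c \<in> lie_centre br"
  shows "B c c = 0"
proof (rule ccontr)
  assume cc: "B c c \<noteq> 0"
  define I where "I = range (\<lambda>k. k *\<^sub>R c)"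
  have I: "I = span {c}" by (simp add: I_def span_singleton)
  have ideal: "lie_ideal br I" unfolding I by (rule lie_ideal_central_line[OF c])
  define \<alpha> where "\<alpha> = B c w / B c c"
  have "decomposable br B"
  proof (rule decomposable_if_ideal_splits[OF ideal, of "w - \<alpha> *\<^sub>R c"])
    show "I \<noteq> {0}"
    proof
      assume "I = {0}"
      moreover have "c \<in> I" by (simp add: I span_base)
      ultimately show False using cc by simp
    qed
    show "w - \<alpha> *\<^sub>R c \<noteq> 0"
    proof
      assume "w - \<alpha> *\<^sub>R c = 0"
      then have "w = \<alpha> *\<^sub>R c" by simp
      then have "\<alpha> * (\<alpha> * B c c) = 0" using w(2) by simp
      then show False using cc w(1) \<open>w = \<alpha> *\<^sub>R c\<close> by simp
    qed
    show "B (w - \<alpha> *\<^sub>R c) y = 0" if "y \<in> I" for y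
      using that cc form_commute[of w c] by (auto simp: I_def \<alpha>_def)
    show "x = 0" if x: "x \<in> I" and orth: "\<And>y. y \<in> I \<Longrightarrow> B x y = 0" for x
    proof -
      obtain k where "x = k *\<^sub>R c" using x by (auto simp: I_def)
      moreover have "B x c = 0" using orth by (simp add: I span_base)
      ultimately show ?thesis using cc by simp
    qed
    show "\<exists>a\<in>I. \<forall>y\<in>I. B (x - a) y = 0" for x
      using cc form_commute[of x c] by (intro bexI[of _ "(B c x / B c c) *\<^sub>R c"]) (auto simp: I_def)
  qed
  then show False using indec by (simp add: indecomposable_def)
qed

end

text \<open>A compact Lie algebra: a bracket with invariant inner product on the euclidean subspace E.
The bracket is a bilinear map on the ambient space, but the Lie axioms are only required on E.\<close>

locale compact_bracket = symmetric_form B for B :: "'a::euclidean_space \<Rightarrow> 'a \<Rightarrow> real" +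
  fixes E :: "'a set" and b :: "'a \<Rightarrow> 'a \<Rightarrow> 'a"
  assumes subspace_E: "subspace E" and pos_definite_E: "pos_definite_on B E"
    and bracket_bilinear: "bilinear b"
    and bracket_closed: "x \<in> E \<Longrightarrow> y \<in> E \<Longrightarrow> b x y \<in> E"
    and bracket_anti: "x \<in> E \<Longrightarrow> y \<in> E \<Longrightarrow> b x y = - b y x"
    and bracket_leibniz: "x \<in> E \<Longrightarrow> y \<in> E \<Longrightarrow> z \<in> E \<Longrightarrow> b x (b y z) = b (b x y) z + b y (b x z)"
    and bracket_invariant: "x \<in> E \<Longrightarrow> y \<in> E \<Longrightarrow> z \<in> E \<Longrightarrow> B (b x y) z = - B y (b x z)"
begin

lemma linear_b_left: "linear (\<lambda>x. b x y)" and linear_b_right: "linear (\<lambda>y. b x y)"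
  using bracket_bilinear by (simp_all add: bilinear_def)

lemma bracket_simps[simp]:
  "b (x + y) z = b x z + b y z" "b z (x + y) = b z x + b z y"
  "b (x - y) z = b x z - b y z" "b z (x - y) = b z x - b z y"
  "b (c *\<^sub>R x) z = c *\<^sub>R b x z" "b z (c *\<^sub>R x) = c *\<^sub>R b z x"
  "b (- x) z = - b x z" "b z (- x) = - b z x"
  "b 0 z = 0" "b z 0 = 0"
  using linear_add[OF linear_b_left] linear_add[OF linear_b_right]
    linear_diff[OF linear_b_left] linear_diff[OF linear_b_right]
    linear_scale[OF linear_b_left] linear_scale[OF linear_b_right]
    linear_neg[OF linear_b_left] linear_neg[OF linear_b_right]
    linear_0[OF linear_b_left] linear_0[OF linear_b_right]
  by auto

lemma form_nonneg_E: "x \<in> E \<Longrightarrow> 0 \<le> B x x"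
  using pos_definite_E unfolding pos_definite_on_def by (cases "x = 0") (auto intro: less_imp_le)

lemma form_zero_E: "x \<in> E \<Longrightarrow> B x x = 0 \<Longrightarrow> x = 0"
  using pos_definite_E unfolding pos_definite_on_def by fastforce

definition skew_derivation :: "('a \<Rightarrow> 'a) \<Rightarrow> bool" where
  "skew_derivation D \<longleftrightarrow> linear D \<and> (\<forall>x\<in>E. D x \<in> E) \<and>
     (\<forall>x\<in>E. \<forall>y\<in>E. B (D x) y = - B x (D y)) \<and>
     (\<forall>x\<in>E. \<forall>y\<in>E. D (b x y) = b (D x) y + b x (D y))"

lemma skew_derivation_inner: "c \<in> E \<Longrightarrow> skew_derivation (b c)"
  unfolding skew_derivation_def
  using linear_b_right bracket_closed bracket_invariant bracket_leibniz by blast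

lemma skew_derivation_diff:
  assumes "skew_derivation D" and "skew_derivation D'"
  shows "skew_derivation (\<lambda>x. D x - D' x)"
  using assms unfolding skew_derivation_def
  by (auto simp: linear_compose_sub subspace_diff[OF subspace_E] algebra_simps)

definition derived :: "'a set" where
  "derived = span {b x y | x y. x \<in> E \<and> y \<in> E}"

lemma subspace_derived: "subspace derived"
  by (simp add: derived_def)

lemma derived_subset_E: "derived \<subseteq> E"
  unfolding derived_def by (rule span_minimal) (auto simp: bracket_closed subspace_E)

lemma bracket_in_derived: "x \<in> E \<Longrightarrow> y \<in> E \<Longrightarrow> b x y \<in> derived"
  unfolding derived_def by (intro span_base) blast

lemma skew_derivationD:
  assumes "skew_derivation D"
  shows "linear D" and "x \<in> E \<Longrightarrow> D x \<in> E"
    and "x \<in> E \<Longrightarrow> y \<in> E \<Longrightarrow> B (D x) y = - B x (D y)"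
    and "x \<in> E \<Longrightarrow> y \<in> E \<Longrightarrow> D (b x y) = b (D x) y + b x (D y)"
  using assms by (simp_all add: skew_derivation_def)

lemma derivation_pairing_summand:
  assumes D: "skew_derivation D" and x: "x \<in> E" and y: "y \<in> E" and e: "e \<in> E"
  shows "B (b (D x) e) (b y e) = B (b x (D (b y e))) e - B (D (b x (b y e))) e"
proof -
  note D_closed = skew_derivationD(2)[OF D] and D_skew = skew_derivationD(3)[OF D]
  have ye: "b y e \<in> E" using bracket_closed[OF y e] .
  have "B (b (D x) e) (b y e) = B (D (b x e)) (b y e) - B (b x (D e)) (b y e)"
    using skew_derivationD(4)[OF D x e] by simp
  also have "B (D (b x e)) (b y e) = B (b x (D (b y e))) e"
    using D_skew[OF bracket_closed[OF x e] ye] bracket_invariant[OF x e D_closed[OF ye]]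
      form_commute[of e] by simp
  also have "B (b x (D e)) (b y e) = B (D (b x (b y e))) e"
    using bracket_invariant[OF x D_closed[OF e] ye] D_skew[OF e bracket_closed[OF x ye]]
      form_commute[of e] by simp
  finally show ?thesis .
qed

lemma derivation_commutator_summand:
  assumes D: "skew_derivation D" and x: "x \<in> E" and y: "y \<in> E" and e: "e \<in> E"
  shows "B (D (b y (b x e))) e - B (D (b x (b y e))) e = B (D e) (b (b x y) e)"
proof -
  have "b y (b x e) - b x (b y e) = - b (b x y) e"
    using bracket_leibniz[OF y x e] bracket_anti[OF y x] by simp
  then have "D (b y (b x e)) - D (b x (b y e)) = - D (b (b x y) e)"
    by (metis skew_derivationD(1)[OF D] linear_diff linear_neg)
  then have "B (D (b y (b x e))) e - B (D (b x (b y e))) e = - B (D (b (b x y) e)) e"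
    by (metis form_simps(3) form_simps(7))
  then show ?thesis
    using skew_derivationD(3)[OF D bracket_closed[OF bracket_closed[OF x y] e] e]
      form_commute[of "D e"]
    by simp
qed

text \<open>For the trace form \<langle>X, Y\<rangle> = sum over e of B (X e) (Y e) this says
\<langle>[D, ad x], ad y\<rangle> = \<langle>D, [ad x, ad y]\<rangle>, since ad (D x) = [D, ad x].\<close>

lemma derivation_pairing:
  assumes Q: "orthonormal_basis E Q" and D: "skew_derivation D" and x: "x \<in> E" and y: "y \<in> E"
  shows "(\<Sum>e\<in>Q. B (b (D x) e) (b y e)) = (\<Sum>e\<in>Q. B (D e) (b (b x y) e))"
proof -
  have QE: "Q \<subseteq> E" using Q by (simp add: orthonormal_basis_def)
  have "(\<Sum>e\<in>Q. B (b (D x) e) (b y e))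
      = (\<Sum>e\<in>Q. B (b x (D (b y e))) e) - (\<Sum>e\<in>Q. B (D (b x (b y e))) e)"
    using derivation_pairing_summand[OF D x y] QE by (simp add: sum_subtractf subset_iff)
  also have "(\<Sum>e\<in>Q. B (b x (D (b y e))) e) = (\<Sum>e\<in>Q. B (D (b y (b x e))) e)"
    using trace_commute[OF Q linear_b_right, of x "\<lambda>z. D (b y z)"]
      linear_compose[OF linear_b_right skew_derivationD(1)[OF D]] bracket_closed
      skew_derivationD(2)[OF D] x y
    by (simp add: o_def)
  also have "\<dots> - (\<Sum>e\<in>Q. B (D (b x (b y e))) e) = (\<Sum>e\<in>Q. B (D e) (b (b x y) e))"
    using derivation_commutator_summand[OF D x y] QE by (simp add: sum_subtractf[symmetric] subset_iff)
  finally show ?thesis .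
qed

lemma derivation_orthogonal_to_inner_vanishes:
  assumes Q: "orthonormal_basis E Q" and D: "skew_derivation D"
    and orth: "\<And>y. y \<in> E \<Longrightarrow> (\<Sum>e\<in>Q. B (D e) (b y e)) = 0"
    and x: "x \<in> E" and y: "y \<in> E"
  shows "D (b x y) = 0"
proof -
  note DE = skew_derivationD(2)[OF D]
  have central: "b (D z) w = 0" if z: "z \<in> E" and w: "w \<in> E" for z w
  proof -
    have Q_props: "finite Q" "Q \<subseteq> E" "E \<subseteq> span Q" using Q by (auto simp: orthonormal_basis_def)
    have zero_sum: "(\<Sum>e\<in>Q. B (b (D z) e) (b (D z) e)) = 0"
      using derivation_pairing[OF Q D z DE[OF z]] orth[OF bracket_closed[OF z DE[OF z]]] by simp
    have DzE: "b (D z) e \<in> E" if "e \<in> Q" for e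
      using that Q_props(2) by (intro bracket_closed DE z) auto
    have "b (D z) e = 0" if "e \<in> Q" for e
    proof (rule form_zero_E[OF DzE[OF that]])
      show "B (b (D z) e) (b (D z) e) = 0"
        using sum_nonneg_eq_0_iff[OF Q_props(1), of "\<lambda>e. B (b (D z) e) (b (D z) e)"]
          form_nonneg_E[OF DzE] zero_sum that by blast
    qed
    moreover have "w \<in> span Q" using w Q_props(3) by blast
    ultimately show ?thesis by (rule linear_eq_0_on_span[OF linear_b_right[of "D z"]])
  qed
  have "D (b x y) = b (D x) y + b x (D y)" using skew_derivationD(4)[OF D x y] .
  also have "\<dots> = 0" using central[OF x y] central[OF y x] bracket_anti[OF x DE[OF y]] by simp
  finally show ?thesis .
qed

text \<open>Minimising the trace norm of D - ad c over c leaves a skew derivation orthogonal to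
all inner derivations.\<close>

lemma inner_projection_of_derivation:
  assumes Q: "orthonormal_basis E Q" and D: "skew_derivation D"
  shows "\<exists>c\<in>E. \<forall>y\<in>E. (\<Sum>e\<in>Q. B (D e - b c e) (b y e)) = 0"
proof -
  have fin: "finite Q" and QE: "Q \<subseteq> E" and span_Q: "span Q = E"
    using Q span_subspace[of Q E] subspace_E by (auto simp: orthonormal_basis_def)
  define N where "N c y = (\<Sum>e\<in>Q. B (b c e) (b y e))" for c y
  define \<phi> where "\<phi> y = (\<Sum>e\<in>Q. B (D e) (b y e))" for y
  define \<kappa> where "\<kappa> = (\<Sum>e\<in>Q. B (D e) (D e))"
  have bil: "bilinear N" unfolding bilinear_def
    by (auto intro!: linearI simp: N_def sum.distrib sum_distrib_left)
  have sym: "N x y = N y x" for x y unfolding N_def by (rule sum.cong[OF refl]) (rule form_commute)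
  have psd: "N x x \<ge> 0" if "x \<in> span Q" for x
    unfolding N_def using QE that span_Q by (intro sum_nonneg form_nonneg_E bracket_closed) auto
  have lin: "linear \<phi>" by (rule linearI) (simp_all add: \<phi>_def sum.distrib sum_distrib_left)
  have bound: "\<kappa> - 2 * \<phi> c + N c c \<ge> 0" if "c \<in> span Q" for c
  proof -
    have "\<kappa> - 2 * \<phi> c + N c c = (\<Sum>e\<in>Q. B (D e - b c e) (D e - b c e))"
      unfolding \<kappa>_def \<phi>_def N_def using form_commute[of "b c _" "D _"]
      by (simp add: sum_subtractf sum.distrib sum_distrib_left algebra_simps)
    also have "\<dots> \<ge> 0" using QE skew_derivationD(2)[OF D] bracket_closed[of c] that span_Q
      by (intro sum_nonneg form_nonneg_E subspace_diff[OF subspace_E]) auto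
    finally show ?thesis .
  qed
  obtain c where c: "c \<in> span Q" "\<forall>y\<in>span Q. N c y = \<phi> y"
    using psd_form_represents_functional[OF bil sym fin psd lin bound] by blast
  then show ?thesis
    using span_Q by (intro bexI[of _ c]) (auto simp: N_def \<phi>_def sum_subtractf)
qed

lemma skew_derivation_inner_on_derived:
  assumes D: "skew_derivation D"
  shows "\<exists>c\<in>E. \<forall>s\<in>derived. D s = b c s"
proof -
  obtain Q where Q: "orthonormal_basis E Q"
    using orthonormal_basis_exists[OF subspace_E pos_definite_E] by blast
  then obtain c where c: "c \<in> E" and orth: "\<And>y. y \<in> E \<Longrightarrow> (\<Sum>e\<in>Q. B (D e - b c e) (b y e)) = 0"
    using inner_projection_of_derivation[OF Q D] by blast
  have D': "skew_derivation (\<lambda>x. D x - b c x)"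
    by (rule skew_derivation_diff[OF D skew_derivation_inner[OF c]])
  have "D (b x y) - b c (b x y) = 0" if "x \<in> E" "y \<in> E" for x y
    using derivation_orthogonal_to_inner_vanishes[OF Q D' _ that] orth by simp
  then have "D s - b c s = 0" if "s \<in> derived" for s
    using linear_eq_0_on_span[OF skew_derivationD(1)[OF D'], of "{b x y | x y. x \<in> E \<and> y \<in> E}" s]
      that
    by (auto simp: derived_def)
  then show ?thesis using c by auto
qed

text \<open>By invariance, the part of E orthogonal to the derived algebra is central.\<close>

lemma abelian_if_derived_abelian:
  assumes derived_abelian: "\<And>s t. s \<in> derived \<Longrightarrow> t \<in> derived \<Longrightarrow> b s t = 0"
    and x: "x \<in> E" and y: "y \<in> E"
  shows "b x y = 0"
proof -
  have "pos_definite_on B derived"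
    using pos_definite_E derived_subset_E unfolding pos_definite_on_def by blast
  then obtain Q where Q: "orthonormal_basis derived Q"
    using orthonormal_basis_exists[OF subspace_derived] by blast
  define p where "p z = (\<Sum>e\<in>Q. B z e *\<^sub>R e)" for z
  have p_derived: "p z \<in> derived" for z
    unfolding p_def by (rule orthonormal_projection(1)[OF Q subspace_derived])
  have p_E: "p z \<in> E" for z using p_derived derived_subset_E by blast
  have central: "b (z - p z) w = 0" if z: "z \<in> E" and w: "w \<in> E" for z w
  proof -
    have z': "z - p z \<in> E" using z p_E subspace_E by (simp add: subspace_diff)
    define t where "t = b (z - p z) w"
    have tE: "t \<in> E" unfolding t_def using bracket_closed[OF z' w] .
    have "B t t = - B (b w (z - p z)) t" using bracket_anti[OF z' w] by (simp add: t_def)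
    also have "\<dots> = B (z - p z) (b w t)" using bracket_invariant[OF w z' tE] by simp
    also have "\<dots> = 0"
      unfolding p_def by (rule orthonormal_projection(2)[OF Q subspace_derived bracket_in_derived[OF w tE]])
    finally show ?thesis using form_zero_E[OF tE] by (simp add: t_def)
  qed
  have "b x y = - b y (p x)"
    using central[OF x y] bracket_anti[OF p_E y] by (simp add: eq_neg_iff_add_eq_0)
  moreover have "b y (p x) = 0" using central[OF y p_E] derived_abelian[OF p_derived p_derived] by simp
  ultimately show ?thesis by simp
qed

end

locale centre_frame = metric_lie +
  fixes r :: nat and u v :: "nat \<Rightarrow> 'a"
  assumes r_index: "r = form_index B" and r_pos: "0 < r"
    and frame: "hyperbolic_frame r u v"
    and v_central: "i < r \<Longrightarrow> br (v i) x = 0"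
    and indecomposable: "indecomposable br B"
begin

lemma uv: "i < r \<Longrightarrow> j < r \<Longrightarrow> B (u i) (v j) = (if i = j then 1 else 0)"
  and uu: "i < r \<Longrightarrow> j < r \<Longrightarrow> B (u i) (u j) = 0"
  and vv: "i < r \<Longrightarrow> j < r \<Longrightarrow> B (v i) (v j) = 0"
  using frame by (simp_all add: hyperbolic_frame_def)

lemma vu: "i < r \<Longrightarrow> j < r \<Longrightarrow> B (v i) (u j) = (if i = j then 1 else 0)"
  using uv[of j i] form_commute[of "v i" "u j"] by auto

lemma v_central_right: "i < r \<Longrightarrow> br x (v i) = 0"
  using v_central[of i x] br_anti[of x "v i"] by simp

definition E :: "'a set" where
  "E = {x. \<forall>i<r. B x (u i) = 0 \<and> B x (v i) = 0}"

definition prE :: "'a \<Rightarrow> 'a" where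
  "prE x = x - (\<Sum>i<r. B x (v i) *\<^sub>R u i) - (\<Sum>i<r. B x (u i) *\<^sub>R v i)"

lemma E_orthogonal:
  "e \<in> E \<Longrightarrow> i < r \<Longrightarrow> B (u i) e = 0 \<and> B (v i) e = 0 \<and> B e (u i) = 0 \<and> B e (v i) = 0"
  unfolding E_def using form_commute by auto

lemma subspace_E: "subspace E"
  unfolding subspace_def E_def by simp

lemma prE_in_E: "prE x \<in> E"
proof -
  have "B (prE x) (u j) = 0 \<and> B (prE x) (v j) = 0" if j: "j < r" for j
  proof -
    have "(\<Sum>i<r. B x (u i) * B (v i) (u j)) = B x (u j)"
      by (rule sum_lessThan_delta[OF j]) (simp add: vu j)
    moreover have "(\<Sum>i<r. B x (v i) * B (u i) (v j)) = B x (v j)"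
      by (rule sum_lessThan_delta[OF j]) (simp add: uv j)
    ultimately show ?thesis using j by (simp add: prE_def uu vv)
  qed
  then show ?thesis by (simp add: E_def)
qed

lemma form_prE_left: "z \<in> E \<Longrightarrow> B (prE w) z = B w z"
  using E_orthogonal[of z] by (simp add: prE_def)

lemma form_prE_right: "z \<in> E \<Longrightarrow> B z (prE w) = B z w"
  using form_prE_left[of z w] form_commute by metis

lemma frame_decomposition: "x = prE x + (\<Sum>i<r. B x (v i) *\<^sub>R u i) + (\<Sum>i<r. B x (u i) *\<^sub>R v i)"
  by (simp add: prE_def)

lemma linear_prE: "linear prE"
  unfolding prE_def by (rule linearI) (simp_all add: scaleR_sum_right sum.distrib algebra_simps)

lemma prE_simps[simp]:
  "prE (x + y) = prE x + prE y" "prE (x - y) = prE x - prE y" "prE (c *\<^sub>R x) = c *\<^sub>R prE x"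
  "prE 0 = 0" "prE (- x) = - prE x" "prE (sum f A) = (\<Sum>i\<in>A. prE (f i))"
  using linear_add[OF linear_prE] linear_diff[OF linear_prE] linear_scale[OF linear_prE]
    linear_0[OF linear_prE] linear_neg[OF linear_prE] linear_sum[OF linear_prE]
  by auto

lemma prE_id: "x \<in> E \<Longrightarrow> prE x = x"
  by (simp add: prE_def E_def)

lemma prE_u: "i < r \<Longrightarrow> prE (u i) = 0"
proof -
  assume i: "i < r"
  have "(\<Sum>j<r. B (u i) (v j) *\<^sub>R u j) = u i" by (rule sum_lessThan_delta[OF i]) (simp add: uv i)
  then show ?thesis using i by (simp add: prE_def uu)
qed

lemma prE_v: "i < r \<Longrightarrow> prE (v i) = 0"
proof -
  assume i: "i < r"
  have "(\<Sum>j<r. B (v i) (u j) *\<^sub>R v j) = v i" by (rule sum_lessThan_delta[OF i]) (simp add: vu i)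
  then show ?thesis using i by (simp add: prE_def vv)
qed

lemma span_frame_inter_E: "span (u ` {..<r} \<union> v ` {..<r}) \<inter> E = {0}"
proof (intro equalityI subsetI)
  fix x assume x: "x \<in> span (u ` {..<r} \<union> v ` {..<r}) \<inter> E"
  have "prE x = 0"
    using linear_eq_0_on_span[OF linear_prE _, of "u ` {..<r} \<union> v ` {..<r}" x] x prE_u prE_v
    by blast
  then show "x \<in> {0}" using x prE_id by simp
next
  fix x :: 'a assume "x \<in> {0}"
  then show "x \<in> span (u ` {..<r} \<union> v ` {..<r}) \<inter> E" by (simp add: span_zero subspace_0[OF subspace_E])
qed

lemma span_frame_plus_E: "\<exists>a\<in>span (u ` {..<r} \<union> v ` {..<r}). \<exists>e\<in>E. x = a + e"
proof (intro bexI)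
  show "x = ((\<Sum>i<r. B x (v i) *\<^sub>R u i) + (\<Sum>i<r. B x (u i) *\<^sub>R v i)) + prE x"
    by (simp add: prE_def)
  show "(\<Sum>i<r. B x (v i) *\<^sub>R u i) + (\<Sum>i<r. B x (u i) *\<^sub>R v i) \<in> span (u ` {..<r} \<union> v ` {..<r})"
    by (intro span_add span_sum span_scale span_base) auto
qed (rule prE_in_E)

lemma frame_independent: "independent (u ` {..<r} \<union> v ` {..<r})"
  and frame_card: "card (u ` {..<r} \<union> v ` {..<r}) = 2 * r"
proof -
  define w where "w i = (if i < r then u i else v (i - r))" for i
  define p where "p i = (if i < r then v i else u (i - r))" for i
  have dual: "B (w i) (p j) = (if i = j then 1 else 0)" if "i < 2 * r" "j < 2 * r" for i j
    using that by (cases "i < r"; cases "j < r") (auto simp: w_def p_def uv uu vv vu)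
  have "{..<2 * r} = {..<r} \<union> (\<lambda>i. i + r) ` {..<r}"
  proof (intro equalityI subsetI)
    fix i assume "i \<in> {..<2 * r}"
    then show "i \<in> {..<r} \<union> (\<lambda>i. i + r) ` {..<r}"
      by (cases "i < r") (auto intro!: image_eqI[of _ _ "i - r"])
  qed auto
  moreover have "w ` {..<r} = u ` {..<r}" and "(\<lambda>i. w (i + r)) ` {..<r} = v ` {..<r}"
    by (auto intro!: image_cong simp: w_def)
  ultimately have "w ` {..<2 * r} = u ` {..<r} \<union> v ` {..<r}"
    by (simp add: image_Un image_image)
  then show "independent (u ` {..<r} \<union> v ` {..<r})" "card (u ` {..<r} \<union> v ` {..<r}) = 2 * r"
    using dual_family_independent(2,3)[where k = "2 * r", OF dual] by simp_all
qed

lemma E_negative_if_not_positive: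
  assumes eE: "e \<in> E" and "e \<noteq> 0" and "\<not> 0 < B e e"
  obtains e' where "e' \<in> E" and "B e' e' < 0"
proof (cases "B e e < 0")
  case True
  then show ?thesis using that eE by blast
next
  case False
  then have ee: "B e e = 0" using \<open>\<not> 0 < B e e\<close> by simp
  obtain y where "B e y \<noteq> 0" using form_nondegenerate[of e] \<open>e \<noteq> 0\<close> by blast
  define f where "f = prE y"
  have fE: "f \<in> E" by (simp add: f_def prE_in_E)
  define \<beta> where "\<beta> = B e f"
  have \<beta>: "\<beta> \<noteq> 0" using \<open>B e y \<noteq> 0\<close> form_prE_right[OF eE, of y] by (simp add: \<beta>_def f_def)
  define m where "m = \<bar>B f f\<bar> + 1"
  have m: "m > 0" "B f f - 2 * m < 0" by (auto simp: m_def)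
  define e2 where "e2 = e - (\<beta> / m) *\<^sub>R f"
  have "e2 \<in> E" using eE fE subspace_E by (simp add: e2_def subspace_diff subspace_scale)
  moreover have "B e2 e2 = (\<beta> / m)\<^sup>2 * (B f f - 2 * m)"
    using ee form_commute[of f e] m(1) by (simp add: e2_def \<beta>_def power2_eq_square field_simps)
  moreover have "(\<beta> / m)\<^sup>2 * (B f f - 2 * m) < 0"
    using \<beta> m by (intro mult_pos_neg) auto
  ultimately show ?thesis using that by auto
qed

lemma pos_definite_E: "pos_definite_on B E"
  unfolding pos_definite_on_def
proof (intro ballI impI, rule ccontr)
  fix e assume "e \<in> E" and "e \<noteq> 0" and "\<not> 0 < B e e"
  then obtain e' where e': "e' \<in> E" "B e' e' < 0" by (rule E_negative_if_not_positive)
  \<comment> \<open>e' would extend the r negative directions u_i - v_i to r + 1.\<close>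
  define w where "w i = (if i < r then u i - v i else e')" for i
  define p where "p i = (if i < r then v i else (1 / B e' e') *\<^sub>R e')" for i
  define d where "d i = (if i < r then -2 else B e' e')" for i
  have "Suc r \<le> form_index B"
  proof (rule diagonal_family_le_index[of "Suc r" w p d])
    show "B (w i) (p j) = (if i = j then 1 else 0)" if "i < Suc r" "j < Suc r" for i j
      using that e' E_orthogonal[OF e'(1)] by (auto simp: w_def p_def uv vv less_Suc_eq)
    show "B (w i) (w j) = (if i = j then d i else 0)" if "i < Suc r" "j < Suc r" for i j
      using that e' E_orthogonal[OF e'(1)] by (auto simp: w_def d_def uv vv uu vu less_Suc_eq)
    show "d i < 0" if "i < Suc r" for i using that e' by (auto simp: d_def)
  qed
  then show False using r_index by simp
qed

lemma lie_centre_eq: "lie_centre br = span (v ` {..<r})"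
proof -
  have "v 0 \<noteq> 0" using uv[of 0 0] r_pos by auto
  then have "B c c = 0" if "c \<in> lie_centre br" for c
    using centre_isotropic[OF indecomposable _ vv[OF r_pos r_pos] that] by blast
  then have "dim (lie_centre br) \<le> r"
    using isotropic_dim_le_index[OF subspace_lie_centre] isotropic_if_null[OF subspace_lie_centre]
      r_index by blast
  moreover have "span (v ` {..<r}) \<subseteq> lie_centre br"
    using v_central by (intro span_minimal subspace_lie_centre) (auto simp: lie_centre_def)
  moreover have "dim (span (v ` {..<r})) = r"
    by (rule dual_family_independent(4)[of r v u]) (simp add: vu)
  ultimately show ?thesis
    using subspace_dim_equal[OF subspace_span subspace_lie_centre, of "v ` {..<r}"] by auto
qed

definition brE :: "'a \<Rightarrow> 'a \<Rightarrow> 'a" where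
  "brE x y = prE (br x y)"

definition J :: "nat \<Rightarrow> 'a \<Rightarrow> 'a" where
  "J i = brE (u i)"

lemma brE_in_E: "brE x y \<in> E"
  by (simp add: brE_def prE_in_E)

lemma brE_simps[simp]:
  "brE (x + y) z = brE x z + brE y z" "brE z (x + y) = brE z x + brE z y"
  "brE (x - y) z = brE x z - brE y z" "brE z (x - y) = brE z x - brE z y"
  "brE (c *\<^sub>R x) z = c *\<^sub>R brE x z" "brE z (c *\<^sub>R x) = c *\<^sub>R brE z x"
  "brE (- x) z = - brE x z" "brE z (- x) = - brE z x"
  "brE 0 z = 0" "brE z 0 = 0"
  "brE (sum f A) z = (\<Sum>i\<in>A. brE (f i) z)" "brE z (sum f A) = (\<Sum>i\<in>A. brE z (f i))"
  by (simp_all add: brE_def)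

lemma brE_v[simp]: "i < r \<Longrightarrow> brE (v i) y = 0"
  by (simp add: brE_def v_central)

lemma bilinear_brE: "bilinear brE"
  unfolding bilinear_def by (auto intro!: linearI)

lemma brE_anti: "brE x y = - brE y x"
  using br_anti[of x y] by (simp add: brE_def)

lemma br_orthogonal_v: "j < r \<Longrightarrow> B (br x y) (v j) = 0"
  using form_invariant[of x y "v j"] v_central_right by simp

lemma br_decomposition: "br x y = brE x y + (\<Sum>k<r. B (br x y) (u k) *\<^sub>R v k)"
  using br_orthogonal_v by (simp add: brE_def prE_def)

lemma br_br_left: "br (br x y) z = br (brE x y) z"
  by (subst br_decomposition) (simp add: v_central)

lemma br_br_right: "br z (br x y) = br z (brE x y)"
  by (subst br_decomposition) (simp add: v_central_right)

lemma brE_invariant: "y \<in> E \<Longrightarrow> z \<in> E \<Longrightarrow> B (brE x y) z = - B y (brE x z)"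
  by (simp add: brE_def form_prE_left form_prE_right form_invariant)

lemma brE_leibniz: "brE x (brE y z) = brE (brE x y) z + brE y (brE x z)"
proof -
  have "brE x (brE y z) = prE (br x (br y z))" by (simp add: brE_def br_br_right[unfolded brE_def])
  also have "\<dots> = prE (br (br x y) z) + prE (br y (br x z))" by (subst br_leibniz) simp
  also have "\<dots> = brE (brE x y) z + brE y (brE x z)" by (simp add: brE_def br_br_left br_br_right)
  finally show ?thesis .
qed

end

sublocale centre_frame \<subseteq> E_algebra: compact_bracket B E brE
  using subspace_E pos_definite_E bilinear_brE brE_in_E brE_anti brE_leibniz brE_invariant
  by unfold_locales blast+

context centre_frame
begin

lemma J_skew_derivation: "E_algebra.skew_derivation (J i)"
  unfolding E_algebra.skew_derivation_def J_def
  using bilinear_brE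
  by (intro conjI ballI brE_in_E brE_invariant brE_leibniz) (simp_all add: bilinear_def)

lemma J_linear_skew:
  "linear (J i) \<and> (\<forall>x\<in>E. J i x \<in> E) \<and> (\<forall>x\<in>E. \<forall>y\<in>E. B (J i x) y = - B x (J i y))"
  using J_skew_derivation[of i] unfolding E_algebra.skew_derivation_def by blast

definition inner_part :: "nat \<Rightarrow> 'a" where
  "inner_part i = (SOME c. c \<in> E \<and> (\<forall>s\<in>E_algebra.derived. J i s = brE c s))"

lemma inner_part: "inner_part i \<in> E" "s \<in> E_algebra.derived \<Longrightarrow> J i s = brE (inner_part i) s"
proof -
  have "\<exists>c. c \<in> E \<and> (\<forall>s\<in>E_algebra.derived. J i s = brE c s)"
    using E_algebra.skew_derivation_inner_on_derived[OF J_skew_derivation[of i]] by blast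
  from someI_ex[OF this]
  show "inner_part i \<in> E" "s \<in> E_algebra.derived \<Longrightarrow> J i s = brE (inner_part i) s"
    unfolding inner_part_def by blast+
qed

lemma brE_preserves_derived:
  assumes s: "s \<in> E_algebra.derived"
  shows "brE x s \<in> E_algebra.derived"
proof -
  have sE: "s \<in> E" using s E_algebra.derived_subset_E by blast
  have "brE x s = brE (prE x) s + (\<Sum>i<r. B x (v i) *\<^sub>R brE (inner_part i) s)"
  proof -
    have "brE x s = brE (prE x) s + (\<Sum>i<r. B x (v i) *\<^sub>R J i s)"
      by (subst frame_decomposition[of x]) (simp add: J_def)
    then show ?thesis using inner_part(2)[OF s] by simp
  qed
  also have "\<dots> \<in> E_algebra.derived"
    using E_algebra.subspace_derived
    by (intro subspace_add subspace_sum subspace_scale E_algebra.bracket_in_derived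
        prE_in_E inner_part(1) sE) auto
  finally show ?thesis .
qed

definition lift :: "'a \<Rightarrow> 'a" where
  "lift a = a + (\<Sum>k<r. B a (inner_part k) *\<^sub>R v k)"

lemma linear_lift: "linear lift"
  unfolding lift_def by (rule linearI) (simp_all add: scaleR_sum_right sum.distrib algebra_simps)

text \<open>Since J k agrees with ad (inner_part k) on the derived algebra, invariance turns the
v-components of these brackets into inner products with the inner parts.\<close>

lemma br_E_derived:
  assumes x: "x \<in> E" and y: "y \<in> E_algebra.derived"
  shows "br x y = lift (brE x y)"
proof -
  have yE: "y \<in> E" using y E_algebra.derived_subset_E by blast
  have "B (br x y) (u k) = B (brE x y) (inner_part k)" for k
  proof -
    have "B (br x y) (u k) = B y (br (u k) x)" using form_invariant[of x y "u k"] br_anti[of x "u k"] by simp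
    also have "\<dots> = B y (J k x)" using form_prE_right[OF yE] by (simp add: J_def brE_def)
    also have "\<dots> = - B x (J k y)" using brE_invariant[OF x yE, of "u k"] form_commute by (simp add: J_def)
    also have "\<dots> = - B x (brE (inner_part k) y)" using inner_part(2)[OF y] by simp
    also have "\<dots> = B (brE (inner_part k) x) y" using brE_invariant[OF x yE] by simp
    also have "\<dots> = - B (brE x (inner_part k)) y" using brE_anti[of "inner_part k" x] by simp
    also have "\<dots> = B (brE x y) (inner_part k)"
      using brE_invariant[OF yE inner_part(1), of x] form_commute by metis
    finally show ?thesis .
  qed
  then show ?thesis by (subst br_decomposition) (simp add: lift_def)
qed

definition derived_ideal :: "'a set" where
  "derived_ideal = span {br s t | s t. s \<in> E_algebra.derived \<and> t \<in> E_algebra.derived}"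

lemma derived_ideal_subset_lift: "derived_ideal \<subseteq> lift ` E_algebra.derived"
  unfolding derived_ideal_def
proof (rule span_minimal)
  show "subspace (lift ` E_algebra.derived)"
    by (rule linear_subspace_image[OF linear_lift E_algebra.subspace_derived])
  show "{br s t | s t. s \<in> E_algebra.derived \<and> t \<in> E_algebra.derived} \<subseteq> lift ` E_algebra.derived"
    using br_E_derived E_algebra.derived_subset_E E_algebra.bracket_in_derived by blast
qed

lemma pos_definite_derived_ideal: "pos_definite_on B derived_ideal"
  unfolding pos_definite_on_def
proof (intro ballI impI)
  fix w assume "w \<in> derived_ideal" "w \<noteq> 0"
  then obtain a where a: "a \<in> E_algebra.derived" "w = lift a" using derived_ideal_subset_lift by blast
  then have "a \<noteq> 0" using \<open>w \<noteq> 0\<close> by (auto simp: lift_def)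
  have aE: "a \<in> E" using a(1) E_algebra.derived_subset_E by blast
  then have "B a a > 0" using pos_definite_E \<open>a \<noteq> 0\<close> unfolding pos_definite_on_def by blast
  moreover have "B (lift a) (lift a) = B a a" using E_orthogonal[OF aE] by (simp add: lift_def vv)
  ultimately show "B w w > 0" using a by simp
qed

lemma lie_ideal_derived_ideal: "lie_ideal br derived_ideal"
proof -
  let ?G = "{br s t | s t. s \<in> E_algebra.derived \<and> t \<in> E_algebra.derived}"
  have gen: "br x g \<in> derived_ideal" if g: "g \<in> ?G" for x g
  proof -
    obtain s t where st: "g = br s t" "s \<in> E_algebra.derived" "t \<in> E_algebra.derived"
      using g by blast
    have "br x g = br (br x s) t + br s (br x t)" unfolding st(1) by (rule br_leibniz)
    also have "\<dots> = br (brE x s) t + br s (brE x t)" by (simp only: br_br_left br_br_right)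
    also have "\<dots> \<in> derived_ideal"
      unfolding derived_ideal_def using st(2,3) brE_preserves_derived
      by (intro span_add span_base) blast+
    finally show ?thesis .
  qed
  show ?thesis unfolding lie_ideal_def
  proof (intro conjI allI impI)
    show "subspace derived_ideal" by (simp add: derived_ideal_def)
    fix x y assume "y \<in> derived_ideal"
    then have "br x y \<in> (\<lambda>y. br x y) ` span ?G" by (simp add: derived_ideal_def)
    also have "\<dots> = span ((\<lambda>y. br x y) ` ?G)" by (rule linear_span_image[OF linear_bracket_right, symmetric])
    also have "\<dots> \<subseteq> derived_ideal" using gen by (intro span_minimal) (auto simp: derived_ideal_def)
    finally show "br x y \<in> derived_ideal" .
  qed
qed

lemma derived_ideal_trivial: "derived_ideal = {0}"
proof (rule ccontr)
  assume "derived_ideal \<noteq> {0}"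
  moreover have "B (v 0) y = 0" if y: "y \<in> derived_ideal" for y
  proof -
    obtain a where a: "a \<in> E_algebra.derived" "y = lift a" using derived_ideal_subset_lift y by blast
    then have "a \<in> E" using E_algebra.derived_subset_E by blast
    then show ?thesis using a(2) r_pos E_orthogonal[of a 0] by (simp add: lift_def vv)
  qed
  moreover have "v 0 \<noteq> 0" using uv[of 0 0] r_pos by auto
  ultimately have "decomposable br B"
    using decomposable_if_definite_ideal[OF lie_ideal_derived_ideal _ pos_definite_derived_ideal]
    by blast
  then show False using indecomposable by (simp add: indecomposable_def)
qed

lemma brE_zero:
  assumes "x \<in> E" and "y \<in> E"
  shows "brE x y = 0"
proof (rule E_algebra.abelian_if_derived_abelian[OF _ assms])
  fix s t assume "s \<in> E_algebra.derived" "t \<in> E_algebra.derived"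
  then have "br s t \<in> derived_ideal" unfolding derived_ideal_def by (intro span_base) blast
  then show "brE s t = 0" using derived_ideal_trivial by (simp add: brE_def)
qed

definition K :: "nat \<Rightarrow> nat \<Rightarrow> 'a" where
  "K i j = brE (u i) (u j)"

definition L :: "nat \<Rightarrow> nat \<Rightarrow> nat \<Rightarrow> real" where
  "L i j k = B (br (u i) (u j)) (u k)"

lemma K_in_E: "K i j \<in> E"
  by (simp add: K_def brE_in_E)

lemma K_anti: "K i j = - K j i"
  by (simp add: K_def brE_anti[of "u i"])

lemma L_anti_left: "L i j k = - L j i k"
  by (simp add: L_def br_anti[of "u i"])

lemma L_anti_right: "L i j k = - L i k j"
  unfolding L_def using form_invariant[of "u i" "u j" "u k"] form_commute[of "u j" "br (u i) (u k)"]
  by linarith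

lemma br_u_u: "br (u i) (u j) = K i j + (\<Sum>k<r. L i j k *\<^sub>R v k)"
  by (subst br_decomposition) (simp add: K_def L_def)

lemma br_u_E:
  assumes "x \<in> E"
  shows "br (u i) x = J i x - (\<Sum>j<r. B (K i j) x *\<^sub>R v j)"
proof -
  have "B (br (u i) x) (u k) = - B (K i k) x" for k
    using form_invariant[of "u i" x "u k"] form_prE_right[OF assms, of "br (u i) (u k)"]
      form_commute[of x "K i k"]
    by (simp add: K_def brE_def)
  then show ?thesis by (subst br_decomposition) (simp add: J_def sum_negf)
qed

lemma br_E_E:
  assumes x: "x \<in> E" and y: "y \<in> E"
  shows "br x y = - (\<Sum>i<r. B x (J i y) *\<^sub>R v i)"
proof -
  have "B (br x y) (u k) = - B x (J k y)" for k
  proof -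
    have "B (br x y) (u k) = B y (br (u k) x)" using form_invariant[of x y "u k"] br_anti[of x "u k"] by simp
    also have "\<dots> = B y (J k x)" using form_prE_right[OF y] by (simp add: J_def brE_def)
    also have "\<dots> = - B x (J k y)" using brE_invariant[OF x y, of "u k"] form_commute by (simp add: J_def)
    finally show ?thesis .
  qed
  then show ?thesis by (subst br_decomposition) (simp add: brE_zero[OF x y] sum_negf)
qed

lemma J_commute: "x \<in> E \<Longrightarrow> J i (J j x) - J j (J i x) = 0"
  using brE_leibniz[of "u i" "u j" x] brE_zero[OF K_in_E, of x i j] by (simp add: J_def K_def)

lemma J_K_cyclic: "J i (K j k) + J j (K k i) + J k (K i j) = 0"
  using brE_leibniz[of "u i" "u j" "u k"] brE_anti[of "u i" "u k"] brE_anti[of "brE (u i) (u j)" "u k"]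
  by (simp add: J_def K_def)

lemma K_K_cyclic: "B (K l i) (K j k) + B (K l j) (K k i) + B (K l k) (K i j) = 0"
proof -
  have pair: "B (br (u i) (br (u j) (u k))) (u l) = B (K l i) (K j k)" for i j k
  proof -
    have "B (br (u i) (br (u j) (u k))) (u l) = - B (K j k) (br (u i) (u l))"
      using form_invariant[of "u i" "K j k" "u l"] br_br_right by (simp add: K_def)
    also have "\<dots> = - B (K j k) (K i l)" using form_prE_right[OF K_in_E] by (simp add: K_def brE_def)
    also have "\<dots> = B (K l i) (K j k)" using K_anti[of i l] form_commute by simp
    finally show ?thesis .
  qed
  show ?thesis using br_jacobi[of "u i" "u j" "u k"] pair by (metis form_simps(1) form_simps(9))
qed

end

theorem mainTheorem1:
  fixes br :: "'a::euclidean_space \<Rightarrow> 'a \<Rightarrow> 'a"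
    and B :: "'a \<Rightarrow> 'a \<Rightarrow> real"
  assumes "metric_lie_algebra br B"
    and "indecomposable br B"
    and "form_index B > 0"
    and "\<exists>Z. max_isotropic_centre br B Z"
  shows "\<exists>(u::nat \<Rightarrow> 'a) (v::nat \<Rightarrow> 'a) (E::'a set)
           (K::nat \<Rightarrow> nat \<Rightarrow> 'a) (L::nat \<Rightarrow> nat \<Rightarrow> nat \<Rightarrow> real) (J::nat \<Rightarrow> 'a \<Rightarrow> 'a).
    (let r = form_index B; P = u ` {..<r} \<union> v ` {..<r} in
      \<comment> \<open>vector space decomposition\<close>
      independent P \<and> card P = 2 * r \<and>
      subspace E \<and> pos_definite_on B E \<and>
      span P \<inter> E = {0} \<and> (\<forall>x. \<exists>a\<in>span P. \<exists>e\<in>E. x = a + e) \<and>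
      \<comment> \<open>inner products\<close>
      (\<forall>i<r. \<forall>e\<in>E. B (u i) e = 0 \<and> B (v i) e = 0) \<and>
      (\<forall>i<r. \<forall>j<r. B (u i) (v j) = (if i = j then 1 else 0) \<and>
                    B (u i) (u j) = 0 \<and> B (v i) (v j) = 0) \<and>
      span (v ` {..<r}) = lie_centre br \<and>
      \<comment> \<open>structure data\<close>
      (\<forall>i<r. \<forall>j<r. K i j \<in> E \<and> K i j = - K j i) \<and>
      (\<forall>i<r. \<forall>j<r. \<forall>k<r. L i j k = - L j i k \<and> L i j k = - L i k j) \<and>
      (\<forall>i<r. linear (J i) \<and> (\<forall>x\<in>E. J i x \<in> E) \<and>
              (\<forall>x\<in>E. \<forall>y\<in>E. B (J i x) y = - B x (J i y))) \<and>
      \<comment> \<open>brackets\<close>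
      (\<forall>i<r. \<forall>j<r. br (u i) (u j) = K i j + (\<Sum>k<r. L i j k *\<^sub>R v k)) \<and>
      (\<forall>i<r. \<forall>x\<in>E. br (u i) x = J i x - (\<Sum>j<r. B (K i j) x *\<^sub>R v j)) \<and>
      (\<forall>x\<in>E. \<forall>y\<in>E. br x y = - (\<Sum>i<r. B x (J i y) *\<^sub>R v i)) \<and>
      (\<forall>i<r. \<forall>z. br (v i) z = 0) \<and>
      \<comment> \<open>identities\<close>
      (\<forall>i<r. \<forall>j<r. \<forall>x\<in>E. J i (J j x) - J j (J i x) = 0) \<and>
      (\<forall>i<r. \<forall>j<r. \<forall>k<r. J i (K j k) + J j (K k i) + J k (K i j) = 0) \<and>
      (\<forall>i<r. \<forall>j<r. \<forall>k<r. \<forall>l<r.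
         B (K l i) (K j k) + B (K l j) (K k i) + B (K l k) (K i j) = 0))"
proof -
  interpret metric_lie br B by unfold_locales (fact assms(1))
  obtain Z where "max_isotropic_centre br B Z" using assms(4) by blast
  then have Z: "subspace Z" "Z \<subseteq> lie_centre br" "dim Z = form_index B"
    and iso: "\<And>x y. x \<in> Z \<Longrightarrow> y \<in> Z \<Longrightarrow> B x y = 0"
    by (auto simp: max_isotropic_centre_def)
  obtain u v where frame: "hyperbolic_frame (form_index B) u v" and "v ` {..<form_index B} \<subseteq> Z"
    using isotropic_subspace_frame[OF Z(1) iso] unfolding Z(3) .
  then have "br (v i) x = 0" if "i < form_index B" for i x
    using Z(2) that by (auto simp: lie_centre_def)
  then interpret centre_frame br B "form_index B" u v
    using assms(2,3) frame by unfold_locales auto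
  show ?thesis
    unfolding Let_def
  proof (rule exI[of _ u], rule exI[of _ v], rule exI[of _ E], rule exI[of _ K], rule exI[of _ L],
      rule exI[of _ J], intro conjI)
    show "\<forall>i<form_index B. \<forall>j<form_index B. K i j \<in> E \<and> K i j = - K j i"
      using K_in_E K_anti by blast
    show "\<forall>i<form_index B. \<forall>j<form_index B. \<forall>k<form_index B. L i j k = - L j i k \<and> L i j k = - L i k j"
      using L_anti_left L_anti_right by blast
  qed (simp_all add: frame[unfolded hyperbolic_frame_def] frame_independent frame_card subspace_E
      pos_definite_E span_frame_inter_E span_frame_plus_E E_orthogonal lie_centre_eq J_linear_skew
      br_u_u br_u_E br_E_E v_central J_commute J_K_cyclic K_K_cyclic)
qed

end
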